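(* Let $S_\infty$ be the group of all permutations of $\mathbb{Q}$ with the pointwise convergence topology and $Aut(\mathbb{Q},<)\subset S_\infty$ the subgroup of bijections preserving the usual order of $\mathbb{Q}$. Then $Aut(\mathbb{Q},<)$ is maximally extremely amenable in $S_\infty$: it is extremely amenable, and there is no extremely amenable subgroup $H'$ with $Aut(\mathbb{Q},<)\subsetneq H'\subset S_\infty$.
   Context: A topological group $E$ is extremely amenable if every compact Hausdorff space with a continuous $E$-action has a point fixed by all of $E$. Subgroups carry the subspace topology. *)

theory Defs
  imports "HOL-Analysis.Analysis"
begin

definition Sinf :: "(rat \<Rightarrow> rat) set" where
  "Sinf = {f. bij f}"

definition pointwise_top :: "(rat \<Rightarrow> rat) topology" where
  "pointwise_top = product_topology (\<lambda>_. discrete_topology (UNIV :: rat set)) UNIV"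

definition Sinf_top :: "(rat \<Rightarrow> rat) topology" where
  "Sinf_top = subtopology pointwise_top Sinf"

definition subgroup_Sinf :: "(rat \<Rightarrow> rat) set \<Rightarrow> bool" where
  "subgroup_Sinf H \<longleftrightarrow> H \<subseteq> Sinf \<and> id \<in> H \<and>
     (\<forall>f\<in>H. \<forall>g\<in>H. f \<circ> g \<in> H) \<and> (\<forall>f\<in>H. inv f \<in> H)"

definition AutQ :: "(rat \<Rightarrow> rat) set" where
  "AutQ = {f. bij f \<and> (\<forall>x y. x < y \<longrightarrow> f x < f y)}"

definition continuous_action ::
  "(rat \<Rightarrow> rat) set \<Rightarrow> 'b topology \<Rightarrow> ((rat \<Rightarrow> rat) \<Rightarrow> 'b \<Rightarrow> 'b) \<Rightarrow> bool" where
  "continuous_action H X a \<longleftrightarrow>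
     (\<forall>g\<in>H. \<forall>x\<in>topspace X. a g x \<in> topspace X) \<and>
     (\<forall>x\<in>topspace X. a id x = x) \<and>
     (\<forall>g\<in>H. \<forall>h\<in>H. \<forall>x\<in>topspace X. a (g \<circ> h) x = a g (a h x)) \<and>
     continuous_map (prod_topology (subtopology Sinf_top H) X) X (\<lambda>(g, x). a g x)"

text \<open>Extreme amenability of a subgroup H of S_infinity, tested against all nonempty compact
  Hausdorff spaces whose points live in the type 'b.\<close>

definition extremely_amenable_on :: "'b itself \<Rightarrow> (rat \<Rightarrow> rat) set \<Rightarrow> bool" where
  "extremely_amenable_on (_ :: 'b itself) H \<longleftrightarrow>
     (\<forall>(X :: 'b topology) a. compact_space X \<and> Hausdorff_space X \<and> topspace X \<noteq> {} \<and>
        continuous_action H X a \<longrightarrow> (\<exists>x\<in>topspace X. \<forall>g\<in>H. a g x = x))"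

text \<open>The universe type used for the maximality part. Its cardinality 2^(2^c) bounds that of
  the greatest ambit (Samuel compactification) of any subgroup of S_infinity, so testing
  against spaces in this type is equivalent to testing against all compact Hausdorff spaces.\<close>

type_synonym universe = "(rat \<Rightarrow> rat) set set"

end

theory Submission
  imports Defs "HOL-Library.Ramsey"
begin

(* Extreme amenability (Pestov's theorem) is derived from Ramsey's theorem. For a continuous
   action of Aut(Q,<) on a compact Hausdorff space X, compactness and Urysohn's lemma reduce
   the existence of a fixed point to finding, for finitely many group elements g_j and
   continuous f_j : X -> R, a point x with |f_j (g_j x) - f_j x| small. By compactness the
   action is uniformly continuous: the pointwise stabiliser of a finite set F moves every f_j
   by less than eps. Hence u |-> f_j (u^-1 x0) depends, up to eps, only on the finite set u`F,
   which gives bounded real colourings of the |F|-subsets of Q. Ramsey's theorem yields an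
   infinite, almost monochromatic set Y, and the homogeneity of (Q,<) moves all the finitely
   many relevant sets into Y at once.

   Maximality: every subgroup H of S_infinity acts continuously on the compact space of
   tournaments on Q. A fixed point is an H-invariant tournament; since Aut(Q,<) is transitive
   on increasing pairs, invariance forces it to be < or >, so every element of H preserves the
   order. The statement only tests extreme amenability on spaces carried by the type universe,
   so extreme amenability is first transferred along an injection of types. *)

lemma AutQ_less_iff: "f \<in> AutQ \<Longrightarrow> f x < f y \<longleftrightarrow> x < y"
  unfolding AutQ_def by (metis (mono_tags, lifting) mem_Collect_eq not_less_iff_gr_or_eq)

lemma AutQ_bij: "f \<in> AutQ \<Longrightarrow> bij f"
  by (simp add: AutQ_def)

lemma AutQ_comp: "f \<in> AutQ \<Longrightarrow> g \<in> AutQ \<Longrightarrow> f \<circ> g \<in> AutQ"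
  unfolding AutQ_def by (auto intro: bij_comp)

lemma AutQ_inv: "f \<in> AutQ \<Longrightarrow> inv f \<in> AutQ"
proof -
  assume f: "f \<in> AutQ"
  have "inv f x < inv f y" if "x < y" for x y
    using AutQ_less_iff[OF f, of "inv f x" "inv f y"] that AutQ_bij[OF f]
    by (simp add: bij_is_surj surj_f_inv_f)
  then show ?thesis using f by (simp add: AutQ_def bij_imp_bij_inv)
qed

lemma AutQ_Sinf: "AutQ \<subseteq> Sinf"
  by (auto simp: AutQ_def Sinf_def)

lemma AutQ_id: "id \<in> AutQ"
  by (simp add: AutQ_def)

lemma AutQ_subgroup: "subgroup_Sinf AutQ"
  unfolding subgroup_Sinf_def Sinf_def
  using AutQ_comp AutQ_inv by (auto simp: AutQ_def)

lemma AutQ_intro: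
  assumes "\<And>x y. x < y \<Longrightarrow> f x < f y" and "surj f"
  shows "f \<in> AutQ"
proof -
  have "inj f"
    by (metis assms(1) injI linorder_neq_iff order_less_irrefl)
  then show ?thesis using assms by (simp add: AutQ_def bij_def)
qed

text \<open>It is the
  building block for the homogeneity of \<open>(\<rat>, <)\<close>.\<close>

definition stretch :: "rat \<Rightarrow> rat \<Rightarrow> rat \<Rightarrow> rat \<Rightarrow> rat" where
  "stretch t d e y =
     (if y \<le> t then y else if y \<le> d then t + (y - t) * ((e - t) / (d - t)) else y - d + e)"

lemma stretch_strict_mono:
  assumes "t < d" "t < e" "x < y"
  shows "stretch t d e x < stretch t d e y"
proof -
  define c where "c = (e - t) / (d - t)"
  have c: "c > 0" using assms by (simp add: c_def)
  have mid_mono: "(x - t) * c < (y - t) * c"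
    using c assms by (intro mult_strict_right_mono) auto
  have mid_le: "t + (z - t) * c \<le> e" if "z \<le> d" for z
  proof -
    have "(z - t) * c \<le> (d - t) * c" using that c by (intro mult_right_mono) auto
    also have "\<dots> = e - t" using assms by (simp add: c_def)
    finally show ?thesis by simp
  qed
  have mid_gt: "t < t + (z - t) * c" if "t < z" for z
    using that c by simp
  have "stretch t d e z = (if z \<le> t then z else if z \<le> d then t + (z - t) * c else z - d + e)" for z
    by (simp add: stretch_def c_def)
  then show ?thesis
    using assms mid_mono mid_le[of x] mid_gt[of y] by auto
qed

lemma stretch_inverse:
  assumes "t < d" "t < e"
  shows "stretch t d e (stretch t e d y) = y"
proof -
  define c where "c = (e - t) / (d - t)"
  define c' where "c' = (d - t) / (e - t)"
  have cc': "c' * c = 1" and c': "c' > 0"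
    using assms by (simp_all add: c_def c'_def)
  consider "y \<le> t" | "t < y" "y \<le> e" | "e < y" by fastforce
  then show ?thesis
  proof cases
    case 1
    then show ?thesis by (simp add: stretch_def)
  next
    case 2
    define z where "z = t + (y - t) * c'"
    have "(y - t) * c' \<le> (e - t) * c'"
      using 2 c' by (intro mult_right_mono) auto
    moreover have "(e - t) * c' = d - t"
      using assms by (simp add: c'_def)
    moreover have "0 < (y - t) * c'"
      using 2 c' by simp
    ultimately have z: "t < z" "z \<le> d"
      by (simp_all add: z_def)
    have "stretch t e d y = z"
      using 2 by (simp add: stretch_def z_def c'_def)
    moreover have "stretch t d e z = t + (z - t) * c"
      using z by (simp add: stretch_def c_def)
    moreover have "t + (z - t) * c = y"
      by (simp add: z_def mult.assoc cc')
    ultimately show ?thesis by simp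
  next
    case 3
    then show ?thesis using assms by (simp add: stretch_def)
  qed
qed

lemma stretch_AutQ:
  assumes "t < d" "t < e"
  shows "stretch t d e \<in> AutQ" and "y \<le> t \<Longrightarrow> stretch t d e y = y"
    and "stretch t d e d = e"
proof -
  show "stretch t d e \<in> AutQ"
    using stretch_strict_mono[OF assms] stretch_inverse[OF assms]
    by (intro AutQ_intro) (auto intro!: surjI[of _ "stretch t e d"])
qed (use assms in \<open>simp_all add: stretch_def\<close>)

text \<open>Induction on the size, matching the maxima by a stretch that fixes the
  smaller elements.\<close>

lemma AutQ_finite_homogeneous:
  fixes B C :: "rat set"
  assumes "finite B" "finite C" "card B = card C"
  shows "\<exists>u\<in>AutQ. u ` B = C"
  using assms
proof (induction "card B" arbitrary: B C)
  case 0
  then show ?case using AutQ_intro[of id] by auto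
next
  case (Suc n)
  define b where "b = Max B"
  define c where "c = Max C"
  have "B \<noteq> {}" "C \<noteq> {}" using Suc by auto
  then have bB: "b \<in> B" and cC: "c \<in> C"
    using Suc.prems by (simp_all add: b_def c_def)
  have "card (B - {b}) = n" "card (C - {c}) = n"
    using Suc bB cC by auto
  then obtain u where u: "u \<in> AutQ" "u ` (B - {b}) = C - {c}"
    using Suc.hyps(1) Suc.prems by (metis finite_Diff)
  have "\<exists>t. t < u b \<and> t < c \<and> (\<forall>y\<in>C - {c}. y \<le> t)"
  proof (cases "C - {c} = {}")
    case True
    then show ?thesis by (intro exI[of _ "min (u b) c - 1"]) auto
  next
    case False
    define m where "m = Max (C - {c})"
    have m: "m \<in> C - {c}" unfolding m_def using False Suc.prems by (intro Max_in) auto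
    then have "m \<in> u ` (B - {b})" using u(2) by simp
    then obtain b' where b': "b' \<in> B - {b}" "u b' = m" by blast
    have "b' < b" using b' Suc.prems by (auto simp: b_def less_le)
    then have "m < u b" using b' AutQ_less_iff[OF u(1)] by auto
    moreover have "m < c" using m Suc.prems by (auto simp: c_def less_le)
    ultimately show ?thesis using Suc.prems by (intro exI[of _ m]) (auto simp: m_def)
  qed
  then obtain t where t: "t < u b" "t < c" "\<forall>y\<in>C - {c}. y \<le> t" by blast
  let ?w = "stretch t (u b) c"
  have "?w ` (C - {c}) = C - {c}"
    using stretch_AutQ(2)[OF t(1,2)] t(3) by (metis (no_types, lifting) image_cong image_ident)
  moreover have "B = insert b (B - {b})" "C = insert c (C - {c})" using bB cC by auto
  ultimately have "(?w \<circ> u) ` B = C"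
    using u(2) stretch_AutQ(3)[OF t(1,2)] by (metis image_comp image_insert)
  then show ?case using AutQ_comp[OF stretch_AutQ(1)[OF t(1,2)] u(1)] by blast
qed

text \<open>An order automorphism stabilising a finite set fixes it pointwise (a finite linear order
  has no nontrivial automorphism). So \<open>u ` F\<close> determines \<open>u\<close> on \<open>F\<close>.\<close>

lemma AutQ_setwise_imp_pointwise:
  assumes k: "k \<in> AutQ" and F: "finite F" and kF: "k ` F = F"
  shows "\<forall>q\<in>F. k q = q"
proof (rule ccontr)
  assume "\<not> ?thesis"
  then have moved: "{q\<in>F. k q \<noteq> q} \<noteq> {}" by auto
  define a where "a = Min {q\<in>F. k q \<noteq> q}"
  have aF: "a \<in> F" and ka: "k a \<noteq> a"
    using Min_in[OF _ moved] F by (auto simp: a_def)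
  have fixed_below: "k q = q" if "q \<in> F" "q < a" for q
  proof (rule ccontr)
    assume "k q \<noteq> q"
    then have "a \<le> q" unfolding a_def using F that(1) by (intro Min_le) auto
    then show False using that(2) by simp
  qed
  show False
  proof (cases "k a < a")
    case True
    then have "k (k a) = k a" using fixed_below kF aF by blast
    then show False using ka AutQ_bij[OF k] by (metis bij_pointE)
  next
    case False
    then have "a < k a" using ka by simp
    obtain b where b: "b \<in> F" "k b = a" using aF kF by (metis imageE)
    then have "\<not> b < a" using fixed_below \<open>a < k a\<close> by force
    then have "k a \<le> k b" using AutQ_less_iff[OF k] by (metis not_le)
    then show False using \<open>a < k a\<close> b by simp
  qed
qed

lemma AutQ_embed_into_infinite:
  assumes "finite B" "infinite (Y :: rat set)"
  shows "\<exists>u\<in>AutQ. u ` B \<subseteq> Y"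
proof -
  obtain C where "C \<subseteq> Y" "finite C" "card C = card B"
    using infinite_arbitrarily_large[OF assms(2)] by blast
  then show ?thesis using AutQ_finite_homogeneous[of B C] assms by metis
qed

lemma topspace_Sinf_top: "topspace Sinf_top = Sinf"
  by (simp add: Sinf_top_def pointwise_top_def)

lemma subtopology_Sinf_top:
  "H \<subseteq> Sinf \<Longrightarrow> subtopology Sinf_top H = subtopology pointwise_top H"
  by (simp add: Sinf_top_def subtopology_subtopology Int_absorb1)

lemma topspace_subgroup_top: "H \<subseteq> Sinf \<Longrightarrow> topspace (subtopology Sinf_top H) = H"
  by (simp add: topspace_Sinf_top Int_absorb1)

lemma openin_fixing_point:
  assumes "H \<subseteq> Sinf"
  shows "openin (subtopology Sinf_top H) {g\<in>H. g r = p}"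
proof -
  have "openin pointwise_top {g \<in> topspace pointwise_top. g r \<in> {p}}"
    unfolding pointwise_top_def
    by (rule openin_continuous_map_preimage[OF continuous_map_product_projection]) auto
  then show ?thesis
    by (auto simp: subtopology_Sinf_top[OF assms] openin_subtopology pointwise_top_def
        intro!: exI[of _ "{g. g r = p}"])
qed

lemma identity_nbhd_contains_stabiliser:
  assumes H: "H \<subseteq> Sinf" and U: "openin (subtopology Sinf_top H) U" and idU: "id \<in> U"
  shows "\<exists>F. finite F \<and> {k\<in>H. \<forall>q\<in>F. k q = q} \<subseteq> U"
proof -
  obtain T where T: "openin pointwise_top T" "U = T \<inter> H"
    using U by (auto simp: subtopology_Sinf_top[OF H] openin_subtopology)
  obtain V where V: "finite {i. V i \<noteq> UNIV}" "id \<in> Pi\<^sub>E UNIV V" "Pi\<^sub>E UNIV V \<subseteq> T"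
    using T idU unfolding pointwise_top_def openin_product_topology_alt by auto
  have "{k\<in>H. \<forall>q\<in>{i. V i \<noteq> UNIV}. k q = q} \<subseteq> U"
  proof
    fix k assume k: "k \<in> {k\<in>H. \<forall>q\<in>{i. V i \<noteq> UNIV}. k q = q}"
    have "k i \<in> V i" for i
      using k V(2) by (cases "V i = UNIV") auto
    then show "k \<in> U" using V(3) T(2) k by auto
  qed
  then show ?thesis using V(1) by blast
qed

context
  fixes H :: "(rat \<Rightarrow> rat) set" and X :: "'b topology" and a :: "(rat \<Rightarrow> rat) \<Rightarrow> 'b \<Rightarrow> 'b"
  assumes H_Sinf: "H \<subseteq> Sinf" and act: "continuous_action H X a"
begin

lemma action_in: "g \<in> H \<Longrightarrow> x \<in> topspace X \<Longrightarrow> a g x \<in> topspace X"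
  and action_id: "x \<in> topspace X \<Longrightarrow> a id x = x"
  and action_comp: "g \<in> H \<Longrightarrow> h \<in> H \<Longrightarrow> x \<in> topspace X \<Longrightarrow> a (g \<circ> h) x = a g (a h x)"
  and action_continuous:
    "continuous_map (prod_topology (subtopology Sinf_top H) X) X (\<lambda>(g, x). a g x)"
  using act by (simp_all add: continuous_action_def)

lemma action_map_continuous:
  assumes "g \<in> H"
  shows "continuous_map X X (a g)"
proof -
  have "continuous_map X (prod_topology (subtopology Sinf_top H) X) (\<lambda>x. (g, x))"
    using assms H_Sinf by (intro continuous_map_pairedI) (auto simp: topspace_Sinf_top)
  from continuous_map_compose[OF this action_continuous] show ?thesis
    by (simp add: o_def)
qed

text \<open>First locally around a point, then by a finite subcover.\<close>

lemma action_local_uniformity: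
  assumes idH: "id \<in> H" and f: "continuous_map X euclideanreal f" and e: "e > 0"
    and y: "y \<in> topspace X"
  shows "\<exists>V F. openin X V \<and> y \<in> V \<and> finite F \<and>
           (\<forall>k\<in>H. (\<forall>q\<in>F. k q = q) \<longrightarrow> (\<forall>y'\<in>V. \<bar>f (a k y') - f y'\<bar> < e))"
proof -
  let ?P = "prod_topology (subtopology Sinf_top H) X"
  define W where "W = {z \<in> topspace ?P. f ((\<lambda>(g, x). a g x) z) \<in> ball (f y) (e/2)}"
  have "openin ?P W"
    unfolding W_def
    by (rule openin_continuous_map_preimage[OF continuous_map_compose[OF action_continuous f,
          unfolded o_def]]) simp
  moreover have "(id, y) \<in> W"
    using y e idH H_Sinf by (auto simp: W_def action_id topspace_Sinf_top)
  ultimately obtain U V where UV: "openin (subtopology Sinf_top H) U" "openin X V"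
      "id \<in> U" "y \<in> V" "U \<times> V \<subseteq> W"
    unfolding openin_prod_topology_alt by meson
  obtain F where F: "finite F" "{k\<in>H. \<forall>q\<in>F. k q = q} \<subseteq> U"
    using identity_nbhd_contains_stabiliser[OF H_Sinf UV(1,3)] by blast
  have near: "\<bar>f (a k y') - f y\<bar> < e/2" if "k \<in> U" "y' \<in> V" for k y'
    using UV(5) that by (auto simp: W_def dist_real_def abs_minus_commute)
  have "\<bar>f (a k y') - f y'\<bar> < e" if "k \<in> H" "\<forall>q\<in>F. k q = q" "y' \<in> V" for k y'
  proof -
    have y': "y' \<in> topspace X" using UV(2) that(3) openin_subset by blast
    have "k \<in> U" using F(2) that(1,2) by blast
    then have "\<bar>f (a k y') - f y\<bar> < e/2" using near that(3) by blast
    moreover have "\<bar>f y' - f y\<bar> < e/2"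
      using near[OF UV(3) that(3)] action_id[OF y'] by simp
    ultimately show ?thesis by linarith
  qed
  then show ?thesis using UV F by blast
qed

lemma action_uniformity:
  assumes idH: "id \<in> H" and cpt: "compact_space X"
    and f: "continuous_map X euclideanreal f" and e: "e > 0"
  shows "\<exists>F. finite F \<and> (\<forall>k\<in>H. (\<forall>q\<in>F. k q = q) \<longrightarrow> (\<forall>y\<in>topspace X. \<bar>f (a k y) - f y\<bar> < e))"
proof -
  define good where "good F V \<longleftrightarrow> finite F \<and>
      (\<forall>k\<in>H. (\<forall>q\<in>F. k q = q) \<longrightarrow> (\<forall>y\<in>V. \<bar>f (a k y) - f y\<bar> < e))" for F V
  define \<V> where "\<V> = {V. openin X V \<and> (\<exists>F. good F V)}"
  have "topspace X \<subseteq> \<Union>\<V>"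
    using action_local_uniformity[OF idH f e] by (fastforce simp: \<V>_def good_def)
  moreover have "\<forall>V\<in>\<V>. openin X V" by (simp add: \<V>_def)
  ultimately obtain \<W> where \<W>: "finite \<W>" "\<W> \<subseteq> \<V>" "topspace X \<subseteq> \<Union>\<W>"
    using cpt unfolding compact_space_alt by meson
  then have "\<forall>V\<in>\<W>. \<exists>F. good F V" by (auto simp: \<V>_def)
  then obtain FW where FW: "\<And>V. V \<in> \<W> \<Longrightarrow> good (FW V) V" by metis
  have "good (\<Union>V\<in>\<W>. FW V) (topspace X)"
    unfolding good_def
  proof (intro conjI ballI impI)
    show "finite (\<Union>V\<in>\<W>. FW V)" using FW \<W>(1) by (auto simp: good_def)
    fix k y assume k: "k \<in> H" "\<forall>q\<in>(\<Union>V\<in>\<W>. FW V). k q = q" and y: "y \<in> topspace X"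
    then obtain V where "V \<in> \<W>" "y \<in> V" using \<W>(3) by blast
    then show "\<bar>f (a k y) - f y\<bar> < e" using FW[of V] k by (auto simp: good_def)
  qed
  then show ?thesis unfolding good_def by blast
qed

lemma action_uniformity_finite_family:
  assumes idH: "id \<in> H" and cpt: "compact_space X" and J: "finite J"
    and f: "\<And>j. j \<in> J \<Longrightarrow> continuous_map X euclideanreal (f j)" and e: "e > 0"
  shows "\<exists>F. finite F \<and> (\<forall>j\<in>J. \<forall>k\<in>H. (\<forall>q\<in>F. k q = q) \<longrightarrow>
           (\<forall>y\<in>topspace X. \<bar>f j (a k y) - f j y\<bar> < e))"
proof -
  obtain FF where FF: "\<And>j. j \<in> J \<Longrightarrow> finite (FF j) \<and> (\<forall>k\<in>H. (\<forall>q\<in>FF j. k q = q) \<longrightarrow>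
      (\<forall>y\<in>topspace X. \<bar>f j (a k y) - f j y\<bar> < e))"
    using action_uniformity[OF idH cpt f e] by metis
  have "finite (\<Union>(FF ` J))" using FF J by blast
  moreover have "\<forall>j\<in>J. \<forall>k\<in>H. (\<forall>q\<in>\<Union>(FF ` J). k q = q) \<longrightarrow>
      (\<forall>y\<in>topspace X. \<bar>f j (a k y) - f j y\<bar> < e)"
    using FF by blast
  ultimately show ?thesis by blast
qed

end

lemma ramsey_simultaneous:
  fixes col :: "'j \<Rightarrow> 'a set \<Rightarrow> nat"
  assumes J: "finite J" and Z: "infinite Z"
    and bounded: "\<And>j S. j \<in> J \<Longrightarrow> S \<subseteq> Z \<Longrightarrow> finite S \<Longrightarrow> card S = r \<Longrightarrow> col j S < s j"
  shows "\<exists>Y\<subseteq>Z. infinite Y \<and>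
           (\<forall>j\<in>J. \<exists>t. \<forall>S. S \<subseteq> Y \<and> finite S \<and> card S = r \<longrightarrow> col j S = t)"
  using J bounded
proof (induction J rule: finite_induct)
  case empty
  then show ?case using Z by blast
next
  case (insert j J)
  then obtain Y where Y: "Y \<subseteq> Z" "infinite Y"
      "\<forall>i\<in>J. \<exists>t. \<forall>S. S \<subseteq> Y \<and> finite S \<and> card S = r \<longrightarrow> col i S = t"
    by blast
  have "\<forall>S. S \<subseteq> Y \<and> finite S \<and> card S = r \<longrightarrow> col j S < s j"
    using insert.prems Y(1) by blast
  from Ramsey[OF Y(2) this] obtain Y' t where Y': "Y' \<subseteq> Y" "infinite Y'"
      "\<forall>S. S \<subseteq> Y' \<and> finite S \<and> card S = r \<longrightarrow> col j S = t"
    by blast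
  have "\<forall>i\<in>insert j J. \<exists>t. \<forall>S. S \<subseteq> Y' \<and> finite S \<and> card S = r \<longrightarrow> col i S = t"
    using Y(3) Y'(1,3) by (metis insert_iff subset_trans)
  then show ?case using Y(1) Y'(1,2) by (meson subset_trans)
qed

lemma floor_eq_imp_dist_less_one:
  fixes x y :: real
  assumes "\<lfloor>x\<rfloor> = \<lfloor>y\<rfloor>"
  shows "\<bar>x - y\<bar> < 1"
  using assms of_int_floor_le[of x] of_int_floor_le[of y]
    real_of_int_floor_add_one_gt[of x] real_of_int_floor_add_one_gt[of y]
  by linarith

text \<open>Discretising the values into
  intervals of length \<open>\<epsilon>\<close> reduces it to finitely many colours.\<close>

lemma ramsey_approximately_constant:
  fixes c :: "'j \<Rightarrow> 'a set \<Rightarrow> real"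
  assumes J: "finite J" and Z: "infinite Z" and \<epsilon>: "\<epsilon> > 0"
    and bounded: "\<And>j S. j \<in> J \<Longrightarrow> S \<subseteq> Z \<Longrightarrow> finite S \<Longrightarrow> card S = r \<Longrightarrow> \<bar>c j S\<bar> \<le> M j"
  shows "\<exists>Y\<subseteq>Z. infinite Y \<and> (\<forall>j\<in>J. \<forall>S1 S2. S1 \<subseteq> Y \<and> finite S1 \<and> card S1 = r \<and>
           S2 \<subseteq> Y \<and> finite S2 \<and> card S2 = r \<longrightarrow> \<bar>c j S1 - c j S2\<bar> < \<epsilon>)"
proof -
  define level where "level j S = \<lfloor>(c j S + M j) / \<epsilon>\<rfloor>" for j S
  have level_range: "0 \<le> level j S \<and> level j S \<le> \<lfloor>2 * M j / \<epsilon>\<rfloor>"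
    if "j \<in> J" "S \<subseteq> Z" "finite S" "card S = r" for j S
  proof -
    have "0 \<le> (c j S + M j) / \<epsilon>" "(c j S + M j) / \<epsilon> \<le> 2 * M j / \<epsilon>"
      using bounded[OF that] \<epsilon> by (simp_all add: divide_right_mono)
    then show ?thesis unfolding level_def by (simp add: floor_mono)
  qed
  have bound: "nat (level j S) < nat \<lfloor>2 * M j / \<epsilon>\<rfloor> + 1"
    if "j \<in> J" "S \<subseteq> Z" "finite S" "card S = r" for j S
    using level_range[OF that] nat_mono by (simp add: le_imp_less_Suc)
  obtain Y where Y: "Y \<subseteq> Z" "infinite Y"
      "\<forall>j\<in>J. \<exists>t. \<forall>S. S \<subseteq> Y \<and> finite S \<and> card S = r \<longrightarrow> nat (level j S) = t"
    using ramsey_simultaneous[OF J Z, where col = "\<lambda>j S. nat (level j S)"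
        and s = "\<lambda>j. nat \<lfloor>2 * M j / \<epsilon>\<rfloor> + 1", OF bound] by blast
  have "\<bar>c j S1 - c j S2\<bar> < \<epsilon>"
    if j: "j \<in> J" and S: "S1 \<subseteq> Y" "finite S1" "card S1 = r" "S2 \<subseteq> Y" "finite S2" "card S2 = r"
    for j S1 S2
  proof -
    have "S1 \<subseteq> Z" "S2 \<subseteq> Z" using S Y(1) by auto
    then have nonneg: "0 \<le> level j S1" "0 \<le> level j S2"
      using level_range[OF j] S by blast+
    obtain t where "\<forall>S. S \<subseteq> Y \<and> finite S \<and> card S = r \<longrightarrow> nat (level j S) = t"
      using Y(3) j by blast
    then have "nat (level j S1) = nat (level j S2)" using S by simp
    with nonneg have "level j S1 = level j S2" by (metis eq_nat_nat_iff)
    then have "\<bar>(c j S1 + M j) / \<epsilon> - (c j S2 + M j) / \<epsilon>\<bar> < 1"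
      unfolding level_def by (rule floor_eq_imp_dist_less_one)
    then show ?thesis using \<epsilon> by (simp add: diff_divide_distrib[symmetric] abs_divide)
  qed
  then show ?thesis using Y(1,2) by blast
qed

lemma continuous_real_bounded:
  assumes "compact_space X" "continuous_map X euclideanreal f"
  shows "\<exists>M. \<forall>y\<in>topspace X. \<bar>f y\<bar> \<le> M"
proof -
  have "compactin euclideanreal (f ` topspace X)"
    using assms image_compactin compact_space_def by blast
  then have "bounded (f ` topspace X)" by (simp add: compact_imp_bounded)
  then show ?thesis by (auto simp: bounded_real)
qed

lemma AutQ_value_determined_by_image:
  assumes act: "continuous_action AutQ X a"
    and small: "\<forall>k\<in>AutQ. (\<forall>q\<in>F. k q = q) \<longrightarrow> (\<forall>y\<in>topspace X. \<bar>f (a k y) - f y\<bar> < \<epsilon>)"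
    and F: "finite F" and u: "u1 \<in> AutQ" "u2 \<in> AutQ" "u1 ` F = u2 ` F"
    and x0: "x0 \<in> topspace X"
  shows "\<bar>f (a (inv u1) x0) - f (a (inv u2) x0)\<bar> < \<epsilon>"
proof -
  define k where "k = inv u1 \<circ> u2"
  have k: "k \<in> AutQ" using u by (simp add: k_def AutQ_comp AutQ_inv)
  have "k ` F = inv u1 ` u1 ` F" using u(3) by (simp add: k_def image_comp)
  also have "\<dots> = F" using AutQ_bij[OF u(1)] by (simp add: bij_is_inj image_inv_f_f)
  finally have k_fixes: "\<forall>q\<in>F. k q = q" using AutQ_setwise_imp_pointwise[OF k F] by blast
  have "inv u1 = k \<circ> inv u2"
    using AutQ_bij[OF u(2)] by (simp add: k_def fun_eq_iff bij_is_surj surj_f_inv_f)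
  then have "a (inv u1) x0 = a k (a (inv u2) x0)"
    using action_comp[OF AutQ_Sinf act k AutQ_inv[OF u(2)] x0] by simp
  then show ?thesis
    using small k k_fixes action_in[OF AutQ_Sinf act AutQ_inv[OF u(2)] x0] by simp
qed

text \<open>The point is \<open>u\<^sup>-\<^sup>1 x\<^sub>0\<close>,
  where \<open>u\<close> moves \<open>F\<close> and all \<open>G j\<^sup>-\<^sup>1 ` F\<close> into an almost monochromatic set for the
  colourings \<open>S \<mapsto> f j (rep S\<^sup>-\<^sup>1 x\<^sub>0)\<close>, with \<open>rep S\<close> an automorphism mapping \<open>F\<close> onto
  \<open>S\<close>.\<close>

lemma AutQ_approximate_fixed_point:
  assumes act: "continuous_action AutQ X a" and cpt: "compact_space X" and ne: "topspace X \<noteq> {}"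
    and J: "finite J"
    and tests: "\<And>j. j \<in> J \<Longrightarrow> G j \<in> AutQ \<and> continuous_map X euclideanreal (f j) \<and> E j > 0"
  shows "\<exists>x\<in>topspace X. \<forall>j\<in>J. \<bar>f j (a (G j) x) - f j x\<bar> \<le> E j"
proof -
  define \<epsilon> where "\<epsilon> = Min (insert 1 (E ` J)) / 3"
  have \<epsilon>: "\<epsilon> > 0" using tests J by (simp add: \<epsilon>_def)
  have \<epsilon>E: "3 * \<epsilon> \<le> E j" if "j \<in> J" for j
    using that J by (simp add: \<epsilon>_def)
  obtain F where F: "finite F" and small: "\<And>j. j \<in> J \<Longrightarrow> \<forall>k\<in>AutQ. (\<forall>q\<in>F. k q = q) \<longrightarrow>
      (\<forall>y\<in>topspace X. \<bar>f j (a k y) - f j y\<bar> < \<epsilon>)"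
    using action_uniformity_finite_family[OF AutQ_Sinf act AutQ_id cpt J _ \<epsilon>] tests by metis
  obtain x0 where x0: "x0 \<in> topspace X" using ne by blast
  define v where "v j u = f j (a (inv u) x0)" for j u
  have close: "\<bar>v j u1 - v j u2\<bar> < \<epsilon>"
    if "j \<in> J" "u1 \<in> AutQ" "u2 \<in> AutQ" "u1 ` F = u2 ` F" for j u1 u2
    unfolding v_def using AutQ_value_determined_by_image[OF act small F _ _ _ x0] that by blast
  define rep where "rep S = (SOME u. u \<in> AutQ \<and> u ` F = S)" for S
  have rep: "rep S \<in> AutQ \<and> rep S ` F = S" if "finite S" "card S = card F" for S
    unfolding rep_def using AutQ_finite_homogeneous[OF F that(1)] that(2)
    by (metis (mono_tags, lifting) someI_ex)
  have "\<forall>j\<in>J. \<exists>m. \<forall>y\<in>topspace X. \<bar>f j y\<bar> \<le> m"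
    using continuous_real_bounded[OF cpt] tests by blast
  then obtain M where M: "\<And>j y. j \<in> J \<Longrightarrow> y \<in> topspace X \<Longrightarrow> \<bar>f j y\<bar> \<le> M j"
    by metis
  have bounded: "\<bar>v j (rep S)\<bar> \<le> M j"
    if "j \<in> J" "S \<subseteq> UNIV" "finite S" "card S = card F" for j S
  proof -
    have "rep S \<in> AutQ" using rep that(3,4) by blast
    then have "a (inv (rep S)) x0 \<in> topspace X"
      using action_in[OF AutQ_Sinf act AutQ_inv x0] by blast
    then show ?thesis using M that(1) by (simp add: v_def)
  qed
  from ramsey_approximately_constant[OF J infinite_UNIV_char_0 \<epsilon>,
      where c = "\<lambda>j S. v j (rep S)" and r = "card F" and M = M, OF bounded]
  obtain Y where Y: "infinite Y" and Y_approx: "\<forall>j\<in>J. \<forall>S1 S2. S1 \<subseteq> Y \<and> finite S1 \<and>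
      card S1 = card F \<and> S2 \<subseteq> Y \<and> finite S2 \<and> card S2 = card F \<longrightarrow>
      \<bar>v j (rep S1) - v j (rep S2)\<bar> < \<epsilon>"
    by blast
  have "finite (F \<union> (\<Union>j\<in>J. inv (G j) ` F))" using F J by blast
  then obtain u where u: "u \<in> AutQ" "u ` (F \<union> (\<Union>j\<in>J. inv (G j) ` F)) \<subseteq> Y"
    using AutQ_embed_into_infinite[OF _ Y] by blast
  define x where "x = a (inv u) x0"
  have "\<bar>f j (a (G j) x) - f j x\<bar> \<le> E j" if j: "j \<in> J" for j
  proof -
    define u' where "u' = u \<circ> inv (G j)"
    have G: "G j \<in> AutQ" using tests j by blast
    have u': "u' \<in> AutQ" using u(1) G by (simp add: u'_def AutQ_comp AutQ_inv)
    have in_Y: "u ` F \<subseteq> Y" "u' ` F \<subseteq> Y"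
      using u(2) j by (auto simp: u'_def image_comp[symmetric])
    have "inj u" "inj u'" using AutQ_bij u(1) u' bij_is_inj by blast+
    then have card: "card (u ` F) = card F" "card (u' ` F) = card F"
      by (simp_all add: card_image inj_on_subset)
    define r1 where "r1 = rep (u ` F)"
    define r2 where "r2 = rep (u' ` F)"
    have r1: "r1 \<in> AutQ" "r1 ` F = u ` F" and r2: "r2 \<in> AutQ" "r2 ` F = u' ` F"
      using rep card F unfolding r1_def r2_def by auto
    have "\<bar>v j u - v j r1\<bar> < \<epsilon>" using close[OF j u(1) r1(1)] r1(2) by simp
    moreover have "\<bar>v j r1 - v j r2\<bar> < \<epsilon>"
      using Y_approx j in_Y card F unfolding r1_def r2_def by blast
    moreover have "\<bar>v j r2 - v j u'\<bar> < \<epsilon>" using close[OF j r2(1) u'] r2(2) by simp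
    ultimately have "\<bar>v j u - v j u'\<bar> < 3 * \<epsilon>" by linarith
    moreover have "v j u = f j x" by (simp add: v_def x_def)
    moreover have "v j u' = f j (a (G j) x)"
    proof -
      have "inv u' = G j \<circ> inv u"
        using AutQ_bij[OF u(1)] AutQ_bij[OF AutQ_inv[OF G]] AutQ_bij[OF G]
        by (simp add: u'_def o_inv_distrib inv_inv_eq)
      then show ?thesis
        using action_comp[OF AutQ_Sinf act G AutQ_inv[OF u(1)] x0] by (simp add: v_def x_def)
    qed
    ultimately show ?thesis using \<epsilon>E[OF j] by (simp add: abs_minus_commute)
  qed
  moreover have "x \<in> topspace X"
    using action_in[OF AutQ_Sinf act AutQ_inv[OF u(1)] x0] by (simp add: x_def)
  ultimately show ?thesis by blast
qed

text \<open>A family of continuous self-maps of a compact Hausdorff space has a common fixed point as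
  soon as finitely many of them can always be simultaneously almost fixed, as measured by
  finitely many continuous real functions. (The tolerance \<open>1/2\<close> is immaterial, since the
  test functions may be rescaled.)\<close>

lemma common_fixed_point_from_approximate:
  fixes a :: "'g \<Rightarrow> 'b \<Rightarrow> 'b"
  assumes cpt: "compact_space X" and hd: "Hausdorff_space X"
    and cont: "\<And>g. g \<in> H \<Longrightarrow> continuous_map X X (a g)"
    and approx: "\<And>T. finite T \<Longrightarrow> T \<subseteq> H \<times> {f. continuous_map X euclideanreal f} \<Longrightarrow>
                   \<exists>x\<in>topspace X. \<forall>(g, f)\<in>T. \<bar>f (a g x) - f x\<bar> \<le> 1/2"
  shows "\<exists>x\<in>topspace X. \<forall>g\<in>H. a g x = x"
proof -
  define C where "C = (\<lambda>(g, f). {x \<in> topspace X. \<bar>f (a g x) - f x\<bar> \<le> (1/2 :: real)})"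
  define tests where "tests = H \<times> {f. continuous_map X euclideanreal f}"
  have closed: "closedin X (C t)" if test: "t \<in> tests" for t
  proof -
    obtain g f where t: "t = (g, f)" "g \<in> H" "continuous_map X euclideanreal f"
      using test by (auto simp: tests_def)
    have "continuous_map X euclideanreal (\<lambda>x. \<bar>f (a g x) - f x\<bar>)"
      using continuous_map_compose[OF cont[OF t(2)] t(3)] t(3)
      by (intro continuous_intros) (auto simp: o_def)
    from closedin_continuous_map_preimage[OF this, of "{..1/2}"] show ?thesis
      by (simp add: t(1) C_def)
  qed
  have fip: "topspace X \<inter> \<Inter>\<F> \<noteq> {}" if fin: "finite \<F>" "\<F> \<subseteq> C ` tests" for \<F>
  proof -
    obtain T where T: "T \<subseteq> tests" "finite T" "\<F> = C ` T"
      using finite_subset_image[OF fin] by blast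
    then obtain x where "x \<in> topspace X" "\<forall>(g, f)\<in>T. \<bar>f (a g x) - f x\<bar> \<le> 1/2"
      using approx[of T] by (auto simp: tests_def)
    then have "x \<in> topspace X \<inter> \<Inter>\<F>" using T(3) by (auto simp: C_def)
    then show ?thesis by blast
  qed
  have "topspace X \<inter> \<Inter>(C ` tests) \<noteq> {}"
    using compactin_fip[THEN iffD1, OF cpt[unfolded compact_space_def],
        THEN conjunct2, THEN spec[of _ "C ` tests"]] closed fip
    by blast
  then obtain x where x: "x \<in> topspace X" "\<And>t. t \<in> tests \<Longrightarrow> x \<in> C t"
    by blast
  have "a g x = x" if g: "g \<in> H" for g
  proof (rule ccontr)
    assume moved: "a g x \<noteq> x"
    have "a g x \<in> topspace X"
      using continuous_map_image_subset_topspace[OF cont[OF g]] x(1) by blast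
    then have "closedin X {a g x}" "closedin X {x}"
      using Hausdorff_imp_t1_space[OF hd] x(1) by (simp_all add: t1_space_closedin_singleton)
    moreover have "normal_space X"
      using cpt hd compact_Hausdorff_or_regular_imp_normal_space by blast
    ultimately obtain f where f: "continuous_map X euclideanreal f" "f (a g x) = 1" "f x = 0"
      using Urysohn_lemma_alt[of X "{a g x}" "{x}" 1 0] moved by auto
    then have "x \<in> C (g, f)" using x(2) g by (simp add: tests_def)
    then show False using f by (simp add: C_def)
  qed
  then show ?thesis using x(1) by blast
qed

theorem AutQ_extremely_amenable: "extremely_amenable_on TYPE('b) AutQ"
  unfolding extremely_amenable_on_def
proof (intro allI impI)
  fix X :: "'b topology" and a
  assume "compact_space X \<and> Hausdorff_space X \<and> topspace X \<noteq> {} \<and> continuous_action AutQ X a"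
  then have cpt: "compact_space X" and hd: "Hausdorff_space X" and ne: "topspace X \<noteq> {}"
    and act: "continuous_action AutQ X a" by auto
  have approx: "\<exists>x\<in>topspace X. \<forall>(g, f)\<in>T. \<bar>f (a g x) - f x\<bar> \<le> 1/2"
    if "finite T" "T \<subseteq> AutQ \<times> {f. continuous_map X euclideanreal f}" for T
  proof -
    have "\<And>t. t \<in> T \<Longrightarrow> fst t \<in> AutQ \<and> continuous_map X euclideanreal (snd t) \<and> (1/2 :: real) > 0"
      using that(2) by auto
    from AutQ_approximate_fixed_point[OF act cpt ne that(1),
        where G = fst and f = snd and E = "\<lambda>_. 1/2", OF this]
    obtain x where "x \<in> topspace X" "\<forall>t\<in>T. \<bar>snd t (a (fst t) x) - snd t x\<bar> \<le> 1/2"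
      by blast
    then show ?thesis by (intro bexI[of _ x]) (auto simp: split_beta)
  qed
  show "\<exists>x\<in>topspace X. \<forall>g\<in>AutQ. a g x = x"
    by (rule common_fixed_point_from_approximate[OF cpt hd
          action_map_continuous[OF AutQ_Sinf act] approx])
qed

lemma continuous_action_homeomorphic:
  assumes hom: "homeomorphic_maps X Y f f'" and act: "continuous_action H X a"
  shows "continuous_action H Y (\<lambda>g y. f (a g (f' y)))"
proof -
  have f: "continuous_map X Y f" and f': "continuous_map Y X f'"
    and f'f: "\<And>x. x \<in> topspace X \<Longrightarrow> f' (f x) = x" and ff': "\<And>y. y \<in> topspace Y \<Longrightarrow> f (f' y) = y"
    using hom by (auto simp: homeomorphic_maps_def)
  have f'_in: "f' y \<in> topspace X" if "y \<in> topspace Y" for y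
    using continuous_map_image_subset_topspace[OF f'] that by blast
  let ?G = "subtopology Sinf_top H"
  have "continuous_map (prod_topology ?G Y) X (\<lambda>z. f' (snd z))"
    using continuous_map_compose[OF continuous_map_snd f'] by (simp add: o_def)
  then have "continuous_map (prod_topology ?G Y) (prod_topology ?G X) (\<lambda>z. (fst z, f' (snd z)))"
    by (intro continuous_map_pairedI continuous_map_fst)
  from continuous_map_compose[OF continuous_map_compose[OF this] f, of "\<lambda>(g, x). a g x"]
  have "continuous_map (prod_topology ?G Y) Y (\<lambda>(g, y). f (a g (f' y)))"
    using act by (simp add: continuous_action_def o_def case_prod_beta')
  moreover have "f (a g (f' y)) \<in> topspace Y" if "g \<in> H" "y \<in> topspace Y" for g y
    using act f'_in[OF that(2)] that(1) continuous_map_image_subset_topspace[OF f]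
    by (auto simp: continuous_action_def)
  ultimately show ?thesis
    using act f'_in f'f ff' by (auto simp: continuous_action_def)
qed

lemma continuous_action_subspace:
  assumes act: "continuous_action H X a" and inv: "\<And>g x. g \<in> H \<Longrightarrow> x \<in> S \<Longrightarrow> a g x \<in> S"
  shows "continuous_action H (subtopology X S) a"
  using act inv
  by (auto simp: continuous_action_def prod_topology_subtopology continuous_map_in_subtopology
      continuous_map_from_subtopology)

lemma homeomorphic_copy:
  assumes "inj enc"
  shows "homeomorphic_maps X (pullback_topology (enc ` topspace X) (inv enc) X) enc (inv enc)"
  unfolding homeomorphic_maps_def
proof (intro conjI ballI)
  show "continuous_map X (pullback_topology (enc ` topspace X) (inv enc) X) enc"
    using assms by (intro continuous_map_pullback') (auto simp: o_def)
  show "continuous_map (pullback_topology (enc ` topspace X) (inv enc) X) X (inv enc)"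
    using continuous_map_pullback[OF continuous_map_id] by (simp add: o_def)
qed (use assms in \<open>auto simp: topspace_pullback_topology\<close>)

lemma extremely_amenable_on_inj:
  assumes enc: "inj (enc :: 'a \<Rightarrow> 'c)" and ea: "extremely_amenable_on TYPE('c) H"
  shows "extremely_amenable_on TYPE('a) H"
  unfolding extremely_amenable_on_def
proof (intro allI impI)
  fix X :: "'a topology" and a
  assume X: "compact_space X \<and> Hausdorff_space X \<and> topspace X \<noteq> {} \<and> continuous_action H X a"
  define Y where "Y = pullback_topology (enc ` topspace X) (inv enc) X"
  have hom: "homeomorphic_maps X Y enc (inv enc)"
    unfolding Y_def by (rule homeomorphic_copy[OF enc])
  then have "X homeomorphic_space Y" by (auto simp: homeomorphic_space_def)
  then have cpt: "compact_space Y" and hd: "Hausdorff_space Y"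
    using X homeomorphic_compact_space homeomorphic_Hausdorff_space by blast+
  obtain x where "x \<in> topspace X" using X by blast
  then have "enc x \<in> topspace Y"
    using enc by (simp add: Y_def topspace_pullback_topology inv_f_f)
  then have ne: "topspace Y \<noteq> {}" by blast
  have act: "continuous_action H Y (\<lambda>g y. enc (a g (inv enc y)))"
    using continuous_action_homeomorphic[OF hom] X by blast
  obtain y where y: "y \<in> topspace Y" "\<forall>g\<in>H. enc (a g (inv enc y)) = y"
    using ea cpt hd ne act unfolding extremely_amenable_on_def by blast
  have "a g (inv enc y) = inv enc y" if "g \<in> H" for g
    using y(2) that enc by (metis inv_f_f)
  moreover have "inv enc y \<in> topspace X"
    using y(1) by (auto simp: Y_def topspace_pullback_topology)
  ultimately show "\<exists>x\<in>topspace X. \<forall>g\<in>H. a g x = x" by blast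
qed

lemma continuous_map_locally_constant_discrete:
  assumes "\<And>x. x \<in> topspace X \<Longrightarrow> \<exists>V. openin X V \<and> x \<in> V \<and> (\<forall>y\<in>V. f y = f x)"
  shows "continuous_map X (discrete_topology UNIV) f"
  unfolding continuous_map_def
proof (intro conjI allI impI)
  fix U :: "'b set"
  have "\<exists>T. openin X T \<and> x \<in> T \<and> T \<subseteq> {x \<in> topspace X. f x \<in> U}"
    if x: "x \<in> topspace X" "f x \<in> U" for x
  proof -
    obtain V where V: "openin X V" "x \<in> V" "\<forall>y\<in>V. f y = f x" using assms x(1) by blast
    have "V \<subseteq> topspace X" using V(1) by (rule openin_subset)
    then have "V \<subseteq> {x \<in> topspace X. f x \<in> U}" using V(3) x(2) by auto
    then show ?thesis using V by blast
  qed
  then show "openin X {x \<in> topspace X. f x \<in> U}"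
    by (subst openin_subopen) blast
qed simp

definition relations_top :: "(rat \<times> rat \<Rightarrow> bool) topology" where
  "relations_top = product_topology (\<lambda>_. discrete_topology UNIV) UNIV"

definition tournaments :: "(rat \<times> rat \<Rightarrow> bool) set" where
  "tournaments = {R. \<forall>p q. p \<noteq> q \<longrightarrow> R (p, q) \<noteq> R (q, p)}"

definition relabel :: "(rat \<Rightarrow> rat) \<Rightarrow> (rat \<times> rat \<Rightarrow> bool) \<Rightarrow> (rat \<times> rat \<Rightarrow> bool)" where
  "relabel g R = (\<lambda>(p, q). R (inv g p, inv g q))"

lemma topspace_relations_top [simp]: "topspace relations_top = UNIV"
  by (simp add: relations_top_def)

lemma relations_top_coordinate:
  "continuous_map relations_top (discrete_topology UNIV) (\<lambda>R. R i)"
  unfolding relations_top_def by (rule continuous_map_product_projection) simp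

lemma openin_relations_coordinate: "openin relations_top {R. P (R i)}"
  and closedin_relations_coordinate: "closedin relations_top {R. P (R i)}"
  using openin_continuous_map_preimage[OF relations_top_coordinate, of "{b. P b}" i]
    closedin_continuous_map_preimage[OF relations_top_coordinate, of "{b. P b}" i]
  by simp_all

lemma compact_relations_top: "compact_space relations_top"
  unfolding relations_top_def
  by (simp add: compact_space_product_topology compact_space_discrete_topology)

lemma Hausdorff_relations_top: "Hausdorff_space relations_top"
  unfolding relations_top_def by (simp add: Hausdorff_space_product_topology)

lemma closedin_tournaments: "closedin relations_top tournaments"
proof -
  have pos: "closedin relations_top {R. R i}" and neg: "closedin relations_top {R. \<not> R i}" for i
    using closedin_relations_coordinate[of "\<lambda>b. b" i] closedin_relations_coordinate[of Not i]
    by simp_all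
  have pair_closed: "closedin relations_top {R. R (p, q) \<noteq> R (q, p)}" for p q
  proof -
    have "{R. R (p, q) \<noteq> R (q, p)} =
        {R. R (p, q)} \<inter> {R. \<not> R (q, p)} \<union> {R. \<not> R (p, q)} \<inter> {R. R (q, p)}"
      by auto
    then show ?thesis by (simp add: closedin_Un closedin_Int pos neg)
  qed
  have eq: "tournaments = (\<Inter>(p, q)\<in>{(p, q). p \<noteq> q}. {R. R (p, q) \<noteq> R (q, p)})"
    by (auto simp: tournaments_def)
  have "{(p, q). p \<noteq> (q :: rat)} \<noteq> {}"
    using zero_neq_one[where 'a = rat] by blast
  then show ?thesis
    unfolding eq using pair_closed by (intro closedin_INT) auto
qed

lemma relabel_tournament:
  assumes g: "bij g" and R: "R \<in> tournaments"
  shows "relabel g R \<in> tournaments"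
proof -
  have "relabel g R (p, q) \<noteq> relabel g R (q, p)" if "p \<noteq> q" for p q
  proof -
    have "inv g p \<noteq> inv g q"
      using that g by (metis bij_inv_eq_iff)
    then have "R (inv g p, inv g q) \<noteq> R (inv g q, inv g p)"
      using R unfolding tournaments_def by blast
    then show ?thesis by (simp add: relabel_def)
  qed
  then show ?thesis unfolding tournaments_def by blast
qed

lemma relabel_fixed:
  assumes g: "bij g" and fixed: "relabel g R = R"
  shows "R (g p, g q) = R (p, q)"
proof -
  have "inv g (g x) = x" for x using g by (simp add: bij_is_inj inv_f_f)
  then show ?thesis using fun_cong[OF fixed, of "(g p, g q)"] by (simp add: relabel_def)
qed

lemma continuous_map_into_relations_top:
  "continuous_map X relations_top f \<longleftrightarrow> (\<forall>i. continuous_map X (discrete_topology UNIV) (\<lambda>x. f x i))"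
  by (simp add: relations_top_def continuous_map_componentwise_UNIV)

text \<open>The relabelling action is jointly continuous: near \<open>(g\<^sub>0, R\<^sub>0)\<close> the value of the
  relabelled relation at \<open>(p, q)\<close> only depends on \<open>g\<^sup>-\<^sup>1 p\<close>, \<open>g\<^sup>-\<^sup>1 q\<close> (fixed by
  prescribing \<open>g\<close> on two points) and on one coordinate of \<open>R\<close>.\<close>

lemma continuous_relabel:
  assumes H: "H \<subseteq> Sinf"
  shows "continuous_map (prod_topology (subtopology Sinf_top H) relations_top) relations_top
           (\<lambda>(g, R). relabel g R)"
  unfolding continuous_map_into_relations_top
proof
  fix pq :: "rat \<times> rat"
  obtain p q where pq: "pq = (p, q)" by fastforce
  let ?P = "prod_topology (subtopology Sinf_top H) relations_top"
  have bij: "bij g" if "g \<in> H" for g using H that by (auto simp: Sinf_def)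
  have "\<exists>V. openin ?P V \<and> z \<in> V \<and> (\<forall>z'\<in>V. (\<lambda>(g, R). relabel g R) z' pq = (\<lambda>(g, R). relabel g R) z pq)"
    if z: "z \<in> topspace ?P" for z
  proof -
    obtain g0 R0 where z0: "z = (g0, R0)" "g0 \<in> H"
      using z H by (cases z) (simp add: topspace_subgroup_top)
    define r0 where "r0 = inv g0 p"
    define s0 where "s0 = inv g0 q"
    define V where "V = ({g\<in>H. g r0 = p} \<inter> {g\<in>H. g s0 = q}) \<times> {R. R (r0, s0) = R0 (r0, s0)}"
    have "openin ?P V"
      unfolding V_def openin_prod_Times_iff
      using openin_Int[OF openin_fixing_point[OF H] openin_fixing_point[OF H]]
        openin_relations_coordinate[of "\<lambda>b. b = R0 (r0, s0)" "(r0, s0)"] by blast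
    moreover have "z \<in> V"
      using z0 bij[OF z0(2)] by (simp add: V_def r0_def s0_def bij_is_surj surj_f_inv_f)
    moreover have "relabel g R pq = R0 (r0, s0)" if "(g, R) \<in> V" for g R
    proof -
      have "g \<in> H" "g r0 = p" "g s0 = q" "R (r0, s0) = R0 (r0, s0)" using that by (auto simp: V_def)
      then show ?thesis using bij_is_inj[OF bij] by (simp add: relabel_def pq inv_f_eq)
    qed
    ultimately show ?thesis using z0 by fastforce
  qed
  then show "continuous_map ?P (discrete_topology UNIV) (\<lambda>z. (case z of (g, R) \<Rightarrow> relabel g R) pq)"
    by (rule continuous_map_locally_constant_discrete)
qed

lemma continuous_action_relabel:
  assumes H: "subgroup_Sinf H"
  shows "continuous_action H (subtopology relations_top tournaments) relabel"
proof (rule continuous_action_subspace)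
  have bij: "bij g" if "g \<in> H" for g using H that by (auto simp: subgroup_Sinf_def Sinf_def)
  have "relabel (g \<circ> h) R = relabel g (relabel h R)" if "g \<in> H" "h \<in> H" for g h R
    using bij that by (simp add: relabel_def o_inv_distrib)
  moreover have "relabel id R = R" for R by (simp add: relabel_def)
  ultimately show "continuous_action H relations_top relabel"
    using continuous_relabel H unfolding continuous_action_def subgroup_Sinf_def by simp
  show "relabel g R \<in> tournaments" if "g \<in> H" "R \<in> tournaments" for g R
    using relabel_tournament bij that by blast
qed

lemma AutQ_pair_transitive:
  assumes "p < q" "p' < q'"
  shows "\<exists>u\<in>AutQ. u p = p' \<and> u q = q'"
proof -
  obtain u where u: "u \<in> AutQ" "u ` {p, q} = {p', q'}"
    using AutQ_finite_homogeneous[of "{p, q}" "{p', q'}"] assms by auto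
  then have "u p < u q" using AutQ_less_iff assms(1) by blast
  then have "u p = p' \<and> u q = q'" using u(2) assms(2) by (auto simp: doubleton_eq_iff)
  then show ?thesis using u(1) by blast
qed

text \<open>Since \<open>Aut(\<rat>,<)\<close> is transitive on increasing pairs, an invariant tournament is
  either \<open><\<close> or \<open>>\<close>; a bijection preserving it therefore preserves the order.\<close>

lemma invariant_tournament_order_preserving:
  assumes R: "R \<in> tournaments"
    and AutQ_invariant: "\<And>u p q. u \<in> AutQ \<Longrightarrow> R (u p, u q) = R (p, q)"
    and h: "bij h" and h_invariant: "\<And>p q. R (h p, h q) = R (p, q)"
  shows "h \<in> AutQ"
proof -
  have increasing: "R (p, q) = R (0, 1)" if pq: "p < q" for p q
  proof -
    obtain u where "u \<in> AutQ" "u 0 = p" "u 1 = q"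
      using AutQ_pair_transitive[of 0 1 p q] pq by auto
    then show ?thesis using AutQ_invariant[of u 0 1] by simp
  qed
  have "h p < h q" if "p < q" for p q
  proof (rule ccontr)
    assume "\<not> h p < h q"
    moreover have "h p \<noteq> h q" using bij_is_inj[OF h] that by (auto simp: inj_eq)
    ultimately have "h q < h p" by simp
    have "R (q, p) = R (h q, h p)" by (rule h_invariant[symmetric])
    also have "\<dots> = R (0, 1)" by (rule increasing[OF \<open>h q < h p\<close>])
    also have "\<dots> = R (p, q)" by (rule increasing[OF that, symmetric])
    finally have "R (q, p) = R (p, q)" .
    moreover have "p \<noteq> q" using that by simp
    ultimately show False using R unfolding tournaments_def by blast
  qed
  then show ?thesis using h by (simp add: AutQ_def)
qed

definition encode_relation :: "(rat \<times> rat \<Rightarrow> bool) \<Rightarrow> universe" where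
  "encode_relation R = {{\<lambda>x. if x = 0 then p else q} | p q. R (p, q)}"

lemma inj_encode_relation: "inj encode_relation"
proof (rule injI)
  define code :: "rat \<Rightarrow> rat \<Rightarrow> rat \<Rightarrow> rat" where "code p q = (\<lambda>x. if x = 0 then p else q)" for p q
  have code_inj: "p = p' \<and> q = q'" if "code p q = code p' q'" for p q p' q'
    using fun_cong[OF that, of 0] fun_cong[OF that, of 1] by (simp add: code_def)
  have mem: "{code p q} \<in> encode_relation R \<longleftrightarrow> R (p, q)" for R p q
    using code_inj unfolding encode_relation_def code_def[symmetric] by blast
  fix R R' assume "encode_relation R = encode_relation R'"
  then have "R (p, q) = R' (p, q)" for p q using mem by metis
  then show "R = R'" by (simp add: fun_eq_iff)
qed

theorem AutQ_maximal:
  assumes H: "subgroup_Sinf H" and AutQ_H: "AutQ \<subseteq> H"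
    and ea: "extremely_amenable_on TYPE(universe) H"
  shows "H = AutQ"
proof -
  let ?T = "subtopology relations_top tournaments"
  have "compact_space ?T"
    by (rule compact_space_subtopology[OF closedin_compact_space[OF compact_relations_top
          closedin_tournaments]])
  moreover have "Hausdorff_space ?T"
    by (rule Hausdorff_space_subtopology[OF Hausdorff_relations_top])
  moreover have "(\<lambda>(p, q). p < q) \<in> topspace ?T" by (auto simp: tournaments_def)
  then have "topspace ?T \<noteq> {}" by blast
  moreover note continuous_action_relabel[OF H]
  moreover have "extremely_amenable_on TYPE(rat \<times> rat \<Rightarrow> bool) H"
    by (rule extremely_amenable_on_inj[OF inj_encode_relation ea])
  ultimately obtain R where R: "R \<in> topspace ?T" "\<forall>g\<in>H. relabel g R = R"
    unfolding extremely_amenable_on_def by blast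
  have bij: "bij g" if "g \<in> H" for g using H that by (auto simp: subgroup_Sinf_def Sinf_def)
  have "h \<in> AutQ" if h: "h \<in> H" for h
  proof (rule invariant_tournament_order_preserving)
    show "R \<in> tournaments" using R(1) by simp
    show "bij h" using bij[OF h] .
    show "R (h p, h q) = R (p, q)" for p q using relabel_fixed bij h R(2) by blast
    show "R (u p, u q) = R (p, q)" if "u \<in> AutQ" for u p q
      using relabel_fixed bij R(2) AutQ_H that by blast
  qed
  then show ?thesis using AutQ_H by blast
qed

theorem mainTheorem11:
  shows "subgroup_Sinf AutQ \<and>
         extremely_amenable_on TYPE('b) AutQ \<and>
         (\<forall>H'. subgroup_Sinf H' \<and> AutQ \<subseteq> H' \<and> extremely_amenable_on TYPE(universe) H'
                \<longrightarrow> H' = AutQ)"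
  using AutQ_subgroup AutQ_extremely_amenable AutQ_maximal by blast

end
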